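(* Let $\mathbf C$ be a category with all finite limits and colimits, and let $\mathsf W,\mathsf C,\mathsf P,\mathsf Q$ be classes of morphisms of $\mathbf C$, each closed under composition and containing all identities, such that: (1) (2-out-of-3) if two of $f$, $g$, $gf$ lie in $\mathsf W$ then so does the third; (2) $\widehat{\mathsf W}=\mathsf W$ and $\widehat{\mathsf C}=\mathsf C$; (3) (a) $\mathsf P\subset\mathsf{RLP}(\mathsf C)$; (b) $\mathsf Q\subset\mathsf{RLP}(\mathsf C\cap\mathsf W)$; (4) every morphism $f$ factors (a) as $f=pi$ with $i\in\mathsf C$, $p\in\mathsf P$, and (b) as $f=qj$ with $j\in\mathsf C\cap\mathsf W$, $q\in\mathsf Q$; (5) $\mathsf P\subset\mathsf W$. Then $\mathsf W$, $\mathsf C$ and $\widehat{\mathsf Q}$ are the weak equivalences, cofibrations and fibrations of a model category structure on $\mathbf C$.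
   Context: $\widehat{\mathsf S}$ denotes the class of morphisms that are retracts (in the arrow category) of elements of $\mathsf S$. $\mathsf{RLP}(\mathsf S)$ is the class of morphisms $p:E\to B$ such that for every commutative square $g\circ i=p\circ f$ with $i:A\to X$ in $\mathsf S$, $f:A\to E$, $g:X\to B$, there is $h:X\to E$ with $ph=g$ and $hi=f$. *)

theory Defs
  imports Main
begin

record ('o, 'm) cat =
  Obj  :: "'o set"
  Mor  :: "'m set"
  Dom  :: "'m \<Rightarrow> 'o"
  Cod  :: "'m \<Rightarrow> 'o"
  Id   :: "'o \<Rightarrow> 'm"
  Comp :: "'m \<Rightarrow> 'm \<Rightarrow> 'm"   (* Comp g f = g \<circ> f *)

definition hom :: "('o, 'm) cat \<Rightarrow> 'o \<Rightarrow> 'o \<Rightarrow> 'm set" where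
  "hom C a b = {f \<in> Mor C. Dom C f = a \<and> Cod C f = b}"

definition category :: "('o, 'm) cat \<Rightarrow> bool" where
  "category C \<longleftrightarrow>
     (\<forall>f\<in>Mor C. Dom C f \<in> Obj C \<and> Cod C f \<in> Obj C) \<and>
     (\<forall>a\<in>Obj C. Id C a \<in> hom C a a) \<and>
     (\<forall>f\<in>Mor C. \<forall>g\<in>Mor C. Cod C f = Dom C g \<longrightarrow>
        Comp C g f \<in> hom C (Dom C f) (Cod C g)) \<and>
     (\<forall>f\<in>Mor C. Comp C (Id C (Cod C f)) f = f \<and> Comp C f (Id C (Dom C f)) = f) \<and>
     (\<forall>f\<in>Mor C. \<forall>g\<in>Mor C. \<forall>h\<in>Mor C. Cod C f = Dom C g \<longrightarrow> Cod C g = Dom C h \<longrightarrow>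
        Comp C h (Comp C g f) = Comp C (Comp C h g) f)"

definition "functor" :: "('a, 'b) cat \<Rightarrow> ('o, 'm) cat \<Rightarrow> ('a \<Rightarrow> 'o) \<Rightarrow> ('b \<Rightarrow> 'm) \<Rightarrow> bool" where
  "functor J C Fo Fm \<longleftrightarrow>
     (\<forall>j\<in>Obj J. Fo j \<in> Obj C) \<and>
     (\<forall>u\<in>Mor J. Fm u \<in> hom C (Fo (Dom J u)) (Fo (Cod J u))) \<and>
     (\<forall>j\<in>Obj J. Fm (Id J j) = Id C (Fo j)) \<and>
     (\<forall>u\<in>Mor J. \<forall>v\<in>Mor J. Cod J u = Dom J v \<longrightarrow> Fm (Comp J v u) = Comp C (Fm v) (Fm u))"

definition cone :: "('a, 'b) cat \<Rightarrow> ('o, 'm) cat \<Rightarrow> ('a \<Rightarrow> 'o) \<Rightarrow> ('b \<Rightarrow> 'm)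
    \<Rightarrow> 'o \<Rightarrow> ('a \<Rightarrow> 'm) \<Rightarrow> bool" where
  "cone J C Fo Fm L \<pi> \<longleftrightarrow> L \<in> Obj C \<and>
     (\<forall>j\<in>Obj J. \<pi> j \<in> hom C L (Fo j)) \<and>
     (\<forall>u\<in>Mor J. Comp C (Fm u) (\<pi> (Dom J u)) = \<pi> (Cod J u))"

definition limit :: "('a, 'b) cat \<Rightarrow> ('o, 'm) cat \<Rightarrow> ('a \<Rightarrow> 'o) \<Rightarrow> ('b \<Rightarrow> 'm)
    \<Rightarrow> 'o \<Rightarrow> ('a \<Rightarrow> 'm) \<Rightarrow> bool" where
  "limit J C Fo Fm L \<pi> \<longleftrightarrow> cone J C Fo Fm L \<pi> \<and>
     (\<forall>L' \<pi>'. cone J C Fo Fm L' \<pi>' \<longrightarrow>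
        (\<exists>h\<in>hom C L' L. (\<forall>j\<in>Obj J. Comp C (\<pi> j) h = \<pi>' j) \<and>
           (\<forall>h'\<in>hom C L' L. (\<forall>j\<in>Obj J. Comp C (\<pi> j) h' = \<pi>' j) \<longrightarrow> h' = h)))"

definition cocone :: "('a, 'b) cat \<Rightarrow> ('o, 'm) cat \<Rightarrow> ('a \<Rightarrow> 'o) \<Rightarrow> ('b \<Rightarrow> 'm)
    \<Rightarrow> 'o \<Rightarrow> ('a \<Rightarrow> 'm) \<Rightarrow> bool" where
  "cocone J C Fo Fm L \<sigma> \<longleftrightarrow> L \<in> Obj C \<and>
     (\<forall>j\<in>Obj J. \<sigma> j \<in> hom C (Fo j) L) \<and>
     (\<forall>u\<in>Mor J. Comp C (\<sigma> (Cod J u)) (Fm u) = \<sigma> (Dom J u))"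

definition colimit :: "('a, 'b) cat \<Rightarrow> ('o, 'm) cat \<Rightarrow> ('a \<Rightarrow> 'o) \<Rightarrow> ('b \<Rightarrow> 'm)
    \<Rightarrow> 'o \<Rightarrow> ('a \<Rightarrow> 'm) \<Rightarrow> bool" where
  "colimit J C Fo Fm L \<sigma> \<longleftrightarrow> cocone J C Fo Fm L \<sigma> \<and>
     (\<forall>L' \<sigma>'. cocone J C Fo Fm L' \<sigma>' \<longrightarrow>
        (\<exists>h\<in>hom C L L'. (\<forall>j\<in>Obj J. Comp C h (\<sigma> j) = \<sigma>' j) \<and>
           (\<forall>h'\<in>hom C L L'. (\<forall>j\<in>Obj J. Comp C h' (\<sigma> j) = \<sigma>' j) \<longrightarrow> h' = h)))"

text \<open>Finite index categories are taken with objects and morphisms in nat; every finite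
  category is isomorphic to such a one.\<close>

definition finite_category :: "(nat, nat) cat \<Rightarrow> bool" where
  "finite_category J \<longleftrightarrow> category J \<and> finite (Obj J) \<and> finite (Mor J)"

definition has_finite_limits :: "('o, 'm) cat \<Rightarrow> bool" where
  "has_finite_limits C \<longleftrightarrow>
     (\<forall>(J :: (nat, nat) cat) Fo Fm. finite_category J \<and> functor J C Fo Fm \<longrightarrow>
        (\<exists>L \<pi>. limit J C Fo Fm L \<pi>))"

definition has_finite_colimits :: "('o, 'm) cat \<Rightarrow> bool" where
  "has_finite_colimits C \<longleftrightarrow>
     (\<forall>(J :: (nat, nat) cat) Fo Fm. finite_category J \<and> functor J C Fo Fm \<longrightarrow>
        (\<exists>L \<sigma>. colimit J C Fo Fm L \<sigma>))"

definition closed_comp_ids :: "('o, 'm) cat \<Rightarrow> 'm set \<Rightarrow> bool" where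
  "closed_comp_ids C S \<longleftrightarrow> S \<subseteq> Mor C \<and>
     (\<forall>a\<in>Obj C. Id C a \<in> S) \<and>
     (\<forall>f\<in>S. \<forall>g\<in>S. Cod C f = Dom C g \<longrightarrow> Comp C g f \<in> S)"

definition two_out_of_three :: "('o, 'm) cat \<Rightarrow> 'm set \<Rightarrow> bool" where
  "two_out_of_three C W \<longleftrightarrow>
     (\<forall>f\<in>Mor C. \<forall>g\<in>Mor C. Cod C f = Dom C g \<longrightarrow>
        ((f \<in> W \<and> g \<in> W \<longrightarrow> Comp C g f \<in> W) \<and>
         (f \<in> W \<and> Comp C g f \<in> W \<longrightarrow> g \<in> W) \<and>
         (g \<in> W \<and> Comp C g f \<in> W \<longrightarrow> f \<in> W)))"

definition is_retract :: "('o, 'm) cat \<Rightarrow> 'm \<Rightarrow> 'm \<Rightarrow> bool" where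
  "is_retract C f g \<longleftrightarrow> f \<in> Mor C \<and> g \<in> Mor C \<and>
     (\<exists>i r j s. i \<in> hom C (Dom C f) (Dom C g) \<and> r \<in> hom C (Dom C g) (Dom C f) \<and>
                j \<in> hom C (Cod C f) (Cod C g) \<and> s \<in> hom C (Cod C g) (Cod C f) \<and>
                Comp C r i = Id C (Dom C f) \<and> Comp C s j = Id C (Cod C f) \<and>
                Comp C g i = Comp C j f \<and> Comp C f r = Comp C s g)"

definition retract_closure :: "('o, 'm) cat \<Rightarrow> 'm set \<Rightarrow> 'm set" where
  "retract_closure C S = {f \<in> Mor C. \<exists>g\<in>S. is_retract C f g}"

definition lifts :: "('o, 'm) cat \<Rightarrow> 'm \<Rightarrow> 'm \<Rightarrow> bool" where
  "lifts C i p \<longleftrightarrow>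
     (\<forall>f g. f \<in> hom C (Dom C i) (Dom C p) \<and> g \<in> hom C (Cod C i) (Cod C p) \<and>
            Comp C g i = Comp C p f \<longrightarrow>
        (\<exists>h\<in>hom C (Cod C i) (Dom C p). Comp C p h = g \<and> Comp C h i = f))"

definition RLP :: "('o, 'm) cat \<Rightarrow> 'm set \<Rightarrow> 'm set" where
  "RLP C S = {p \<in> Mor C. \<forall>i\<in>S. lifts C i p}"

definition factors_as :: "('o, 'm) cat \<Rightarrow> 'm set \<Rightarrow> 'm set \<Rightarrow> bool" where
  "factors_as C L R \<longleftrightarrow>
     (\<forall>f\<in>Mor C. \<exists>i p. i \<in> L \<and> p \<in> R \<and> Cod C i = Dom C p \<and> Comp C p i = f)"

definition model_structure :: "('o, 'm) cat \<Rightarrow> 'm set \<Rightarrow> 'm set \<Rightarrow> 'm set \<Rightarrow> bool" where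
  "model_structure C W Cof Fib \<longleftrightarrow>
     category C \<and> has_finite_limits C \<and> has_finite_colimits C \<and>
     W \<subseteq> Mor C \<and> Cof \<subseteq> Mor C \<and> Fib \<subseteq> Mor C \<and>
     two_out_of_three C W \<and>
     retract_closure C W = W \<and> retract_closure C Cof = Cof \<and> retract_closure C Fib = Fib \<and>
     (\<forall>i\<in>Cof \<inter> W. \<forall>p\<in>Fib. lifts C i p) \<and>
     (\<forall>i\<in>Cof. \<forall>p\<in>Fib \<inter> W. lifts C i p) \<and>
     factors_as C (Cof \<inter> W) Fib \<and>
     factors_as C Cof (Fib \<inter> W)"

end

theory Submission
  imports Defs
begin

text \<open>
  Proof idea.  Put \<open>F = retract_closure C Q\<close>.  The model category axioms for
  \<open>(W, Cf, F)\<close> follow from three facts about lifting properties: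

  \<^item> \<open>RLP C S\<close> is closed under retracts, so \<open>F \<subseteq> RLP C (Cf \<inter> W)\<close> follows from
    \<open>Q \<subseteq> RLP C (Cf \<inter> W)\<close>, and \<open>F\<close> is retract-closed since retracts compose.
  \<^item> The retract argument: if \<open>x = r \<circ> l\<close> and \<open>x\<close> has the right lifting property
    against \<open>l\<close>, then \<open>x\<close> is a retract of \<open>r\<close>.  Factoring \<open>p \<in> P\<close> as an element of
    \<open>Cf \<inter> W\<close> followed by one of \<open>Q\<close> gives \<open>P \<subseteq> F\<close>; factoring \<open>q \<in> F \<inter> W\<close> as an
    element of \<open>Cf\<close> (which lies in \<open>W\<close> by 2-out-of-3 since \<open>P \<subseteq> W\<close>) followed by one
    of \<open>P\<close> gives \<open>F \<inter> W \<subseteq> retract_closure C P \<subseteq> RLP C Cf\<close>.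
  \<^item> Both factorisations for the model structure are then the given ones, since
    \<open>Q \<subseteq> F\<close> and \<open>P \<subseteq> F \<inter> W\<close>.
\<close>

lemma homD: "f \<in> hom C a b \<Longrightarrow> f \<in> Mor C \<and> Dom C f = a \<and> Cod C f = b"
  by (simp add: hom_def)

lemma hom_self: "f \<in> Mor C \<Longrightarrow> f \<in> hom C (Dom C f) (Cod C f)"
  by (simp add: hom_def)

context
  fixes C :: "('o, 'm) cat"
  assumes C: "category C"
begin

lemma comp_hom: "f \<in> hom C a b \<Longrightarrow> g \<in> hom C b c \<Longrightarrow> Comp C g f \<in> hom C a c"
  using C unfolding category_def hom_def by auto

lemma id_hom: "a \<in> Obj C \<Longrightarrow> Id C a \<in> hom C a a"
  using C unfolding category_def by auto

lemma dom_obj: "f \<in> hom C a b \<Longrightarrow> a \<in> Obj C"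
  using C unfolding category_def hom_def by auto

lemma cod_obj: "f \<in> hom C a b \<Longrightarrow> b \<in> Obj C"
  using C unfolding category_def hom_def by auto

lemma id_left: "f \<in> hom C a b \<Longrightarrow> Comp C (Id C b) f = f"
  using C unfolding category_def hom_def by auto

lemma id_right: "f \<in> hom C a b \<Longrightarrow> Comp C f (Id C a) = f"
  using C unfolding category_def hom_def by auto

lemma assoc:
  "f \<in> hom C a b \<Longrightarrow> g \<in> hom C b c \<Longrightarrow> h \<in> hom C c d \<Longrightarrow>
   Comp C h (Comp C g f) = Comp C (Comp C h g) f"
  using C unfolding category_def hom_def by auto

lemma retract_refl:
  assumes f: "f \<in> Mor C"
  shows "is_retract C f f"
proof -
  have fh: "f \<in> hom C (Dom C f) (Cod C f)" using f by (rule hom_self)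
  define ia where "ia = Id C (Dom C f)"
  define ib where "ib = Id C (Cod C f)"
  have ia: "ia \<in> hom C (Dom C f) (Dom C f)" unfolding ia_def by (rule id_hom[OF dom_obj[OF fh]])
  have ib: "ib \<in> hom C (Cod C f) (Cod C f)" unfolding ib_def by (rule id_hom[OF cod_obj[OF fh]])
  have "Comp C ia ia = ia" "Comp C ib ib = ib" using id_left[OF ia] id_left[OF ib]
    by (simp_all add: ia_def ib_def)
  moreover have "Comp C f ia = Comp C ib f"
    using id_left[OF fh] id_right[OF fh] by (simp add: ia_def ib_def)
  ultimately show ?thesis
    unfolding is_retract_def using f ia ib by (auto simp: ia_def ib_def)
qed

lemma retract_trans:
  assumes r1: "is_retract C f g" and r2: "is_retract C g k"
  shows "is_retract C f k"
proof -
  obtain i r j s where A: "i \<in> hom C (Dom C f) (Dom C g)" "r \<in> hom C (Dom C g) (Dom C f)"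
    "j \<in> hom C (Cod C f) (Cod C g)" "s \<in> hom C (Cod C g) (Cod C f)"
    "Comp C r i = Id C (Dom C f)" "Comp C s j = Id C (Cod C f)"
    "Comp C g i = Comp C j f" "Comp C f r = Comp C s g" and fm: "f \<in> Mor C" "g \<in> Mor C"
    using r1 unfolding is_retract_def by blast
  obtain i' r' j' s' where B: "i' \<in> hom C (Dom C g) (Dom C k)" "r' \<in> hom C (Dom C k) (Dom C g)"
    "j' \<in> hom C (Cod C g) (Cod C k)" "s' \<in> hom C (Cod C k) (Cod C g)"
    "Comp C r' i' = Id C (Dom C g)" "Comp C s' j' = Id C (Cod C g)"
    "Comp C k i' = Comp C j' g" "Comp C g r' = Comp C s' k" and km: "k \<in> Mor C"
    using r2 unfolding is_retract_def by blast
  have fh: "f \<in> hom C (Dom C f) (Cod C f)" and gh: "g \<in> hom C (Dom C g) (Cod C g)"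
    and kh: "k \<in> hom C (Dom C k) (Cod C k)" using fm km by (simp_all add: hom_self)
  have dom_retraction: "Comp C (Comp C r r') (Comp C i' i) = Id C (Dom C f)"
  proof -
    have "Comp C (Comp C r r') (Comp C i' i) = Comp C r (Comp C (Comp C r' i') i)"
      using assoc[OF comp_hom[OF A(1) B(1)] B(2) A(2)] assoc[OF A(1) B(1) B(2)] by simp
    also have "\<dots> = Comp C r i" using B(5) id_left[OF A(1)] by simp
    finally show ?thesis using A(5) by simp
  qed
  have cod_retraction: "Comp C (Comp C s s') (Comp C j' j) = Id C (Cod C f)"
  proof -
    have "Comp C (Comp C s s') (Comp C j' j) = Comp C s (Comp C (Comp C s' j') j)"
      using assoc[OF comp_hom[OF A(3) B(3)] B(4) A(4)] assoc[OF A(3) B(3) B(4)] by simp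
    also have "\<dots> = Comp C s j" using B(6) id_left[OF A(3)] by simp
    finally show ?thesis using A(6) by simp
  qed
  have inclusion_square: "Comp C k (Comp C i' i) = Comp C (Comp C j' j) f"
  proof -
    have "Comp C k (Comp C i' i) = Comp C (Comp C j' g) i"
      using assoc[OF A(1) B(1) kh] B(7) by simp
    also have "\<dots> = Comp C j' (Comp C j f)" using assoc[OF A(1) gh B(3)] A(7) by simp
    also have "\<dots> = Comp C (Comp C j' j) f" using assoc[OF fh A(3) B(3)] .
    finally show ?thesis .
  qed
  have retraction_square: "Comp C f (Comp C r r') = Comp C (Comp C s s') k"
  proof -
    have "Comp C f (Comp C r r') = Comp C (Comp C s g) r'" using assoc[OF B(2) A(2) fh] A(8) by simp
    also have "\<dots> = Comp C s (Comp C s' k)" using assoc[OF B(2) gh A(4)] B(8) by simp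
    also have "\<dots> = Comp C (Comp C s s') k" using assoc[OF kh B(4) A(4)] .
    finally show ?thesis .
  qed
  show ?thesis unfolding is_retract_def
    using fm km dom_retraction cod_retraction inclusion_square retraction_square
      comp_hom[OF A(1) B(1)] comp_hom[OF B(2) A(2)] comp_hom[OF A(3) B(3)] comp_hom[OF B(4) A(4)]
    by blast
qed

lemma retract_closure_idem: "retract_closure C (retract_closure C S) = retract_closure C S"
  unfolding retract_closure_def using retract_trans retract_refl by blast

lemma subset_retract_closure: "S \<subseteq> Mor C \<Longrightarrow> S \<subseteq> retract_closure C S"
  unfolding retract_closure_def using retract_refl by blast

text \<open>The right lifting property against a fixed \<open>i\<close> passes to retracts: lift in the
  square pasted with the retract diagram, then compose with the retraction.\<close>
lemma lifts_retract:
  assumes l: "lifts C i p" and r: "is_retract C p' p" and iM: "i \<in> Mor C"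
  shows "lifts C i p'"
  unfolding lifts_def
proof (intro allI impI)
  fix f g
  assume "f \<in> hom C (Dom C i) (Dom C p') \<and> g \<in> hom C (Cod C i) (Cod C p') \<and>
            Comp C g i = Comp C p' f"
  then have f: "f \<in> hom C (Dom C i) (Dom C p')" and g: "g \<in> hom C (Cod C i) (Cod C p')"
    and sq: "Comp C g i = Comp C p' f" by auto
  obtain ii rr jj ss where R: "ii \<in> hom C (Dom C p') (Dom C p)" "rr \<in> hom C (Dom C p) (Dom C p')"
    "jj \<in> hom C (Cod C p') (Cod C p)" "ss \<in> hom C (Cod C p) (Cod C p')"
    "Comp C rr ii = Id C (Dom C p')" "Comp C ss jj = Id C (Cod C p')"
    "Comp C p ii = Comp C jj p'" "Comp C p' rr = Comp C ss p" and pm: "p \<in> Mor C" "p' \<in> Mor C"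
    using r unfolding is_retract_def by blast
  have ph: "p \<in> hom C (Dom C p) (Cod C p)" and p'h: "p' \<in> hom C (Dom C p') (Cod C p')"
    and ih: "i \<in> hom C (Dom C i) (Cod C i)" using pm iM by (simp_all add: hom_self)
  have pasted_square: "Comp C (Comp C jj g) i = Comp C p (Comp C ii f)"
  proof -
    have "Comp C (Comp C jj g) i = Comp C jj (Comp C p' f)" using assoc[OF ih g R(3)] sq by simp
    also have "\<dots> = Comp C (Comp C p ii) f" using assoc[OF f p'h R(3)] R(7) by simp
    also have "\<dots> = Comp C p (Comp C ii f)" using assoc[OF f R(1) ph] by simp
    finally show ?thesis .
  qed
  obtain h where h: "h \<in> hom C (Cod C i) (Dom C p)" "Comp C p h = Comp C jj g" "Comp C h i = Comp C ii f"
    using l comp_hom[OF f R(1)] comp_hom[OF g R(3)] pasted_square unfolding lifts_def by blast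
  have lower: "Comp C p' (Comp C rr h) = g"
  proof -
    have "Comp C p' (Comp C rr h) = Comp C ss (Comp C p h)"
      using assoc[OF h(1) R(2) p'h] R(8) assoc[OF h(1) ph R(4)] by simp
    also have "\<dots> = Comp C (Comp C ss jj) g" using h(2) assoc[OF g R(3) R(4)] by simp
    finally show ?thesis using R(6) id_left[OF g] by simp
  qed
  have upper: "Comp C (Comp C rr h) i = f"
  proof -
    have "Comp C (Comp C rr h) i = Comp C rr (Comp C ii f)" using assoc[OF ih h(1) R(2)] h(3) by simp
    also have "\<dots> = Comp C (Comp C rr ii) f" using assoc[OF f R(1) R(2)] .
    finally show ?thesis using R(5) id_left[OF f] by simp
  qed
  show "\<exists>h\<in>hom C (Cod C i) (Dom C p'). Comp C p' h = g \<and> Comp C h i = f"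
    using comp_hom[OF h(1) R(2)] lower upper by blast
qed

lemma retract_closure_RLP:
  assumes "X \<subseteq> RLP C S" and "S \<subseteq> Mor C"
  shows "retract_closure C X \<subseteq> RLP C S"
  using assms lifts_retract unfolding retract_closure_def RLP_def by blast

text \<open>A lift \<open>h\<close> in the square with top \<open>id\<close> and bottom \<open>r\<close> is a
  retraction of \<open>l\<close>, exhibiting \<open>x\<close> as a retract of \<open>r\<close> over the identity of the
  common codomain.\<close>
lemma retract_argument:
  assumes lM: "l \<in> Mor C" and rM: "r \<in> Mor C" and comp: "Cod C l = Dom C r"
    and x: "Comp C r l = x" and lift: "lifts C l x"
  shows "is_retract C x r"
proof -
  define a b where "a = Dom C l" and "b = Cod C r"
  have l: "l \<in> hom C a (Dom C r)" and r: "r \<in> hom C (Dom C r) b"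
    using lM rM comp by (simp_all add: a_def b_def hom_def)
  have xh: "x \<in> hom C a b" using comp_hom[OF l r] x by simp
  have ida: "Id C a \<in> hom C a a" by (rule id_hom[OF dom_obj[OF l]])
  have idb: "Id C b \<in> hom C b b" by (rule id_hom[OF cod_obj[OF r]])
  have "Comp C r l = Comp C x (Id C a)" using id_right[OF xh] x by simp
  then obtain h where h: "h \<in> hom C (Dom C r) a" "Comp C x h = r" "Comp C h l = Id C a"
    using lift ida r l xh homD unfolding lifts_def by (metis (no_types, lifting))
  have "Comp C r l = Comp C (Id C b) x" "Comp C x h = Comp C (Id C b) r"
    "Comp C (Id C b) (Id C b) = Id C b"
    using x h(2) id_left[OF xh] id_left[OF r] id_left[OF idb] by simp_all
  then show ?thesis unfolding is_retract_def
    using l r h(1,3) idb xh homD by metis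
qed

lemma RLP_in_retract_closure:
  assumes fac: "factors_as C L R" and X: "X \<subseteq> RLP C L"
    and LM: "L \<subseteq> Mor C" and RM: "R \<subseteq> Mor C"
  shows "X \<subseteq> retract_closure C R"
proof
  fix x assume "x \<in> X"
  then have xM: "x \<in> Mor C" and xL: "\<forall>l\<in>L. lifts C l x" using X unfolding RLP_def by auto
  obtain l r where lr: "l \<in> L" "r \<in> R" "Cod C l = Dom C r" "Comp C r l = x"
    using fac xM unfolding factors_as_def by blast
  have "is_retract C x r"
    using retract_argument lr LM RM xL by blast
  then show "x \<in> retract_closure C R" using xM lr(2) unfolding retract_closure_def by blast
qed

text \<open>Variant for weak equivalences: if every morphism factors as \<open>L\<close> followed by
  \<open>R \<subseteq> W\<close>, then a weak equivalence lifting against \<open>L \<inter> W\<close> is a retract of a morphism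
  in \<open>R\<close>, because by 2-out-of-3 the \<open>L\<close>-part of its factorisation lies in \<open>W\<close>.\<close>
lemma RLP_weq_in_retract_closure:
  assumes two: "two_out_of_three C W" and fac: "factors_as C L R" and RW: "R \<subseteq> W"
    and X: "X \<subseteq> RLP C (L \<inter> W)" and LM: "L \<subseteq> Mor C" and RM: "R \<subseteq> Mor C"
  shows "X \<inter> W \<subseteq> retract_closure C R"
proof
  fix x assume x: "x \<in> X \<inter> W"
  then have xM: "x \<in> Mor C" and xL: "\<forall>l\<in>L \<inter> W. lifts C l x" using X unfolding RLP_def by auto
  obtain l r where lr: "l \<in> L" "r \<in> R" "Cod C l = Dom C r" "Comp C r l = x"
    using fac xM unfolding factors_as_def by blast
  have "l \<in> W"
    using two lr x RW LM RM unfolding two_out_of_three_def by blast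
  then have "is_retract C x r"
    using retract_argument lr LM RM xL by blast
  then show "x \<in> retract_closure C R" using xM lr(2) unfolding retract_closure_def by blast
qed

end

lemma RLP_antimono: "S \<subseteq> T \<Longrightarrow> RLP C T \<subseteq> RLP C S"
  unfolding RLP_def by blast

lemma factors_as_mono: "factors_as C L R \<Longrightarrow> R \<subseteq> R' \<Longrightarrow> factors_as C L R'"
  unfolding factors_as_def by blast

theorem mainTheorem17:
  fixes C :: "('o, 'm) cat" and W Cf P Q :: "'m set"
  assumes "category C" and "has_finite_limits C" and "has_finite_colimits C"
    and "closed_comp_ids C W" and "closed_comp_ids C Cf"
    and "closed_comp_ids C P" and "closed_comp_ids C Q"
    and "two_out_of_three C W"
    and "retract_closure C W = W" and "retract_closure C Cf = Cf"
    and "P \<subseteq> RLP C Cf" and "Q \<subseteq> RLP C (Cf \<inter> W)"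
    and "factors_as C Cf P" and "factors_as C (Cf \<inter> W) Q"
    and "P \<subseteq> W"
  shows "model_structure C W Cf (retract_closure C Q)"
proof -
  note C = assms(1)
  define F where "F = retract_closure C Q"
  have WM: "W \<subseteq> Mor C" and CM: "Cf \<subseteq> Mor C" and PM: "P \<subseteq> Mor C" and QM: "Q \<subseteq> Mor C"
    using assms(4-7) unfolding closed_comp_ids_def by auto
  have FM: "F \<subseteq> Mor C" unfolding F_def retract_closure_def by auto
  have F_lifts: "F \<subseteq> RLP C (Cf \<inter> W)"
    unfolding F_def using retract_closure_RLP[OF C assms(12)] CM by blast
  have F_weq_lifts: "F \<inter> W \<subseteq> RLP C Cf"
    using RLP_weq_in_retract_closure[OF C assms(8,13,15) F_lifts CM PM]
      retract_closure_RLP[OF C assms(11) CM] by blast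
  have "P \<subseteq> RLP C (Cf \<inter> W)" using assms(11) RLP_antimono[of "Cf \<inter> W" Cf C] by blast
  then have "P \<subseteq> F"
    unfolding F_def using RLP_in_retract_closure[OF C assms(14) _ _ QM] CM by blast
  then have factor_acyclic_fib: "factors_as C Cf (F \<inter> W)"
    using factors_as_mono[OF assms(13)] assms(15) by blast
  have factor_fib: "factors_as C (Cf \<inter> W) F"
    using factors_as_mono[OF assms(14)] subset_retract_closure[OF C QM] unfolding F_def by blast
  show ?thesis unfolding model_structure_def F_def[symmetric]
    using C assms(2,3,8,9,10) WM CM FM retract_closure_idem[OF C, of Q] F_lifts F_weq_lifts
      factor_fib factor_acyclic_fib
    unfolding F_def RLP_def by blast
qed

end
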